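(* Let $n\ge3$, $N=2n+1$, $R=2n$, and for $r\in[R]$ let $F_r:2^{[N]}\to\mathbb{R}$ be given by $F_r(S)=1$ if $|S\cap\{r,r+1\}|=1$ and $F_r(S)=0$ otherwise (so $F_r$ is incident exactly to $\{r,r+1\}$, and $\|\mu\|_1=4n$). For this instance, let $\ell_*$ be the supremum of all $\ell\ge0$ such that for every $y\in\mathcal{B}$, $\|Ay-Ay^*\|_2^2\ge\ell\,\|y^*-y\|_2^2$, where $y^*=\arg\min_{z\in\Xi}\|z-y\|_2^2$. Then $\ell_*<7/N^2$.
   Context: For each $r$, $\mathcal{B}_r=\{u\in\mathbb{R}^N:\sum_{i\in S}u_i\le F_r(S)\ \forall S\subseteq[N],\ \sum_{i\in[N]}u_i=F_r([N])\}$ is the base polytope of $F_r$, $\mathcal{B}=\mathcal{B}_1\times\cdots\times\mathcal{B}_R\subseteq(\mathbb{R}^N)^R$, and $A:(\mathbb{R}^N)^R\to\mathbb{R}^N$, $Ay=\sum_ry_r$; $\|y\|_2^2=\sum_r\|y_r\|_2^2$. $\Xi$ is the set of minimizers of $\|Ay\|_2^2$ over $\mathcal{B}$. $\mu_i$ is the number of $r$ such that $F_r$ depends on element $i$. *)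

theory Defs
  imports "HOL-Analysis.Analysis"
begin

text \<open>Vectors in R^N are functions
  nat => real vanishing outside {1..N}; elements of (R^N)^R are functions
  nat => nat => real (first argument r, second i) vanishing outside {1..R} x {1..N}.\<close>

definition Fpath :: "nat \<Rightarrow> nat set \<Rightarrow> real" where
  "Fpath r S = (if card (S \<inter> {r, r+1}) = 1 then 1 else 0)"

definition base_polytope :: "nat \<Rightarrow> (nat set \<Rightarrow> real) \<Rightarrow> (nat \<Rightarrow> real) set" where
  "base_polytope N F = {u. (\<forall>i. i \<notin> {1..N} \<longrightarrow> u i = 0)
      \<and> (\<forall>S. S \<subseteq> {1..N} \<longrightarrow> (\<Sum>i\<in>S. u i) \<le> F S)
      \<and> (\<Sum>i\<in>{1..N}. u i) = F {1..N}}"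

definition prodB :: "nat \<Rightarrow> nat \<Rightarrow> (nat \<Rightarrow> nat set \<Rightarrow> real) \<Rightarrow> (nat \<Rightarrow> nat \<Rightarrow> real) set" where
  "prodB N R F = {y. (\<forall>r. r \<notin> {1..R} \<longrightarrow> y r = (\<lambda>_. 0))
      \<and> (\<forall>r\<in>{1..R}. y r \<in> base_polytope N (F r))}"

definition Aop :: "nat \<Rightarrow> (nat \<Rightarrow> nat \<Rightarrow> real) \<Rightarrow> nat \<Rightarrow> real" where
  "Aop R y = (\<lambda>i. \<Sum>r\<in>{1..R}. y r i)"

definition sqnormN :: "nat \<Rightarrow> (nat \<Rightarrow> real) \<Rightarrow> real" where
  "sqnormN N v = (\<Sum>i\<in>{1..N}. (v i)\<^sup>2)"

definition sqnormNR :: "nat \<Rightarrow> nat \<Rightarrow> (nat \<Rightarrow> nat \<Rightarrow> real) \<Rightarrow> real" where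
  "sqnormNR N R y = (\<Sum>r\<in>{1..R}. \<Sum>i\<in>{1..N}. (y r i)\<^sup>2)"

definition Xi :: "nat \<Rightarrow> nat \<Rightarrow> (nat \<Rightarrow> nat set \<Rightarrow> real) \<Rightarrow> (nat \<Rightarrow> nat \<Rightarrow> real) set" where
  "Xi N R F = {y \<in> prodB N R F. \<forall>z \<in> prodB N R F.
      sqnormN N (Aop R y) \<le> sqnormN N (Aop R z)}"

definition proj_Xi :: "nat \<Rightarrow> nat \<Rightarrow> (nat \<Rightarrow> nat set \<Rightarrow> real) \<Rightarrow> (nat \<Rightarrow> nat \<Rightarrow> real) \<Rightarrow> (nat \<Rightarrow> nat \<Rightarrow> real)" where
  "proj_Xi N R F y = (THE z. z \<in> Xi N R F \<and>
      (\<forall>w \<in> Xi N R F. sqnormNR N R (\<lambda>r i. z r i - y r i) \<le> sqnormNR N R (\<lambda>r i. w r i - y r i)))"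

definition ell_star :: "nat \<Rightarrow> nat \<Rightarrow> (nat \<Rightarrow> nat set \<Rightarrow> real) \<Rightarrow> real" where
  "ell_star N R F = Sup {l::real. l \<ge> 0 \<and> (\<forall>y \<in> prodB N R F.
      sqnormN N (\<lambda>i. Aop R y i - Aop R (proj_Xi N R F y) i)
        \<ge> l * sqnormNR N R (\<lambda>r i. proj_Xi N R F y r i - y r i))}"

end

theory Submission
  imports Defs
begin

text \<open>Every base polytope of the path instance is a segment: its points are a (e_r - e_{r+1})
  with |a| \<le> 1. Hence Ay is the discrete derivative of the coefficient sequence a, which
  vanishes at both ends, so Ay = 0 forces a = 0: the set Xi is the single point 0 and y* = 0.
  The constant ell_* is therefore at most ||Ay||^2 / ||y||^2 for every y in B; the tent
  a_r = min(r, N - r) / n gives 3 / ((n+1)(2n+1)), which is below 7 / N^2.\<close>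

definition edge_vector :: "nat \<Rightarrow> real \<Rightarrow> nat \<Rightarrow> real" where
  "edge_vector r a = (\<lambda>i. (if i = r then a else 0) - (if i = r+1 then a else 0))"

text \<open>The coefficient a_r of y_r = a_r (e_r - e_{r+1}) sits at position r; extending it by 0
  outside [R] makes Ay_i = a_i - a_{i-1} hold also at i = 1 and i = N.\<close>

definition path_coeff :: "nat \<Rightarrow> (nat \<Rightarrow> nat \<Rightarrow> real) \<Rightarrow> nat \<Rightarrow> real" where
  "path_coeff R y r = (if r \<in> {1..R} then y r r else 0)"

lemma edge_vector_zero [simp]: "edge_vector r 0 = (\<lambda>i. 0)"
  by (simp add: edge_vector_def)

lemma sum_edge_vector:
  assumes "finite S"
  shows "(\<Sum>i\<in>S. edge_vector r a i) = (if r \<in> S then a else 0) - (if r+1 \<in> S then a else 0)"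
  using assms by (simp add: edge_vector_def sum_subtractf)

lemma Fpath_eq_0_if_disjoint: "S \<inter> {r, r+1} = {} \<Longrightarrow> Fpath r S = 0"
  by (simp add: Fpath_def)

lemma Fpath_eq_0_if_superset: "{r, r+1} \<subseteq> S \<Longrightarrow> Fpath r S = 0"
  by (simp add: Fpath_def Int_absorb1)

lemma base_polytope_Fpath_eq_edge_vector:
  assumes u: "u \<in> base_polytope N (Fpath r)" and r: "1 \<le> r" "r+1 \<le> N"
  shows "u = edge_vector r (u r)"
proof -
  have out: "\<And>j. j \<notin> {1..N} \<Longrightarrow> u j = 0"
    and le: "\<And>S. S \<subseteq> {1..N} \<Longrightarrow> (\<Sum>j\<in>S. u j) \<le> Fpath r S"
    and tot: "(\<Sum>j\<in>{1..N}. u j) = 0"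
    using u r unfolding base_polytope_def by (auto simp: Fpath_eq_0_if_superset)
  have off_edge: "u j = 0" if "j \<noteq> r" "j \<noteq> r+1" for j
  proof (cases "j \<in> {1..N}")
    case True
    have "u j \<le> 0"
      using le[of "{j}"] True that by (simp add: Fpath_eq_0_if_disjoint)
    moreover have "(\<Sum>k\<in>{1..N} - {j}. u k) \<le> 0"
      using le[of "{1..N} - {j}"] r that by (simp add: Fpath_eq_0_if_superset)
    then have "- u j \<le> 0"
      using True tot by (simp add: sum_diff1)
    ultimately show ?thesis by simp
  qed (use out in blast)
  have "(\<Sum>j\<in>{1..N}. u j) = u r + u (r+1)"
    by (subst sum.mono_neutral_right[of "{1..N}" "{r, r+1}"]) (use r off_edge in auto)
  then have "u (r+1) = - u r" using tot by simp
  then show ?thesis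
    using off_edge by (auto simp: edge_vector_def)
qed

lemma edge_vector_in_base_polytope:
  assumes a: "\<bar>a\<bar> \<le> 1" and r: "1 \<le> r" "r+1 \<le> N"
  shows "edge_vector r a \<in> base_polytope N (Fpath r)"
  unfolding base_polytope_def
proof (intro CollectI conjI allI impI)
  fix S assume "S \<subseteq> {1..N}"
  then have "finite S" by (rule finite_subset) simp
  moreover have "(if r \<in> S then a else 0) - (if r+1 \<in> S then a else 0) \<le> Fpath r S"
    using a by (cases "r \<in> S"; cases "r+1 \<in> S") (auto simp: Fpath_def)
  ultimately show "(\<Sum>i\<in>S. edge_vector r a i) \<le> Fpath r S"
    by (simp add: sum_edge_vector)
next
  show "(\<Sum>i\<in>{1..N}. edge_vector r a i) = Fpath r {1..N}"
    using r by (simp add: sum_edge_vector Fpath_eq_0_if_superset)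
qed (use r in \<open>auto simp: edge_vector_def\<close>)

lemma prodB_Fpath_eq_edge_vector:
  assumes y: "y \<in> prodB N R Fpath" and "R < N"
  shows "y r = edge_vector r (path_coeff R y r)"
proof (cases "r \<in> {1..R}")
  case True
  then have "y r \<in> base_polytope N (Fpath r)" using y unfolding prodB_def by auto
  with True \<open>R < N\<close> show ?thesis
    by (simp add: path_coeff_def base_polytope_Fpath_eq_edge_vector)
qed (use y in \<open>auto simp: prodB_def path_coeff_def\<close>)

lemma Aop_prodB_Fpath:
  assumes y: "y \<in> prodB N R Fpath" and "R < N" and "1 \<le> i"
  shows "Aop R y i = path_coeff R y i - path_coeff R y (i-1)"
proof -
  have "Aop R y i = (\<Sum>r\<in>{1..R}. (if r = i then y r r else 0) - (if r = i-1 then y r r else 0))"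
    unfolding Aop_def
    by (intro sum.cong refl, subst prodB_Fpath_eq_edge_vector[OF assms(1,2)])
       (use \<open>1 \<le> i\<close> in \<open>auto simp: edge_vector_def path_coeff_def\<close>)
  then show ?thesis
    by (simp add: sum_subtractf path_coeff_def)
qed

lemma sqnormN_nonneg: "sqnormN N v \<ge> 0"
  unfolding sqnormN_def by (simp add: sum_nonneg)

lemma sqnormN_eq_0_iff: "sqnormN N v = 0 \<longleftrightarrow> (\<forall>i\<in>{1..N}. v i = 0)"
  unfolding sqnormN_def by (simp add: sum_nonneg_eq_0_iff)

lemma zero_in_prodB_Fpath:
  assumes "R < N"
  shows "(\<lambda>r i. 0) \<in> prodB N R Fpath"
  using edge_vector_in_base_polytope[of 0] assms by (auto simp: prodB_def)

lemma prodB_Fpath_eq_zero_if_Aop_eq_zero: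
  assumes y: "y \<in> prodB N R Fpath" and "R < N"
    and A0: "\<forall>i\<in>{1..N}. Aop R y i = 0"
  shows "y = (\<lambda>r i. 0)"
proof -
  have "i \<le> R \<longrightarrow> path_coeff R y i = 0" for i
  proof (induction i)
    case (Suc i)
    show ?case
    proof
      assume "Suc i \<le> R"
      then have "Aop R y (Suc i) = 0" using A0 \<open>R < N\<close> by simp
      then show "path_coeff R y (Suc i) = 0"
        using Suc.IH \<open>Suc i \<le> R\<close> Aop_prodB_Fpath[OF y \<open>R < N\<close>, of "Suc i"] by simp
    qed
  qed (simp add: path_coeff_def)
  then have "path_coeff R y r = 0" for r
    by (cases "r \<le> R") (auto simp: path_coeff_def)
  then show ?thesis
    using prodB_Fpath_eq_edge_vector[OF y \<open>R < N\<close>] by auto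
qed

lemma Xi_Fpath:
  assumes "R < N"
  shows "Xi N R Fpath = {\<lambda>r i. 0}"
proof -
  have A_zero: "sqnormN N (Aop R (\<lambda>r i. 0)) = 0"
    by (simp add: sqnormN_def Aop_def)
  have "y = (\<lambda>r i. 0)" if "y \<in> Xi N R Fpath" for y
  proof -
    have y: "y \<in> prodB N R Fpath"
      using that by (simp add: Xi_def)
    have "sqnormN N (Aop R y) \<le> 0"
      using that zero_in_prodB_Fpath[OF assms] A_zero unfolding Xi_def by fastforce
    then have "sqnormN N (Aop R y) = 0"
      using sqnormN_nonneg by (rule antisym)
    then show ?thesis
      using prodB_Fpath_eq_zero_if_Aop_eq_zero[OF y assms] by (simp add: sqnormN_eq_0_iff)
  qed
  moreover have "(\<lambda>r i. 0) \<in> Xi N R Fpath"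
    using zero_in_prodB_Fpath[OF assms] A_zero sqnormN_nonneg by (simp add: Xi_def)
  ultimately show ?thesis by blast
qed

lemma proj_Xi_Fpath:
  assumes "R < N"
  shows "proj_Xi N R Fpath y = (\<lambda>r i. 0)"
  unfolding proj_Xi_def Xi_Fpath[OF assms] by (rule the_equality) auto

lemma ell_star_le_ratio:
  assumes y: "y \<in> prodB N R F"
    and pos: "sqnormNR N R (\<lambda>r i. proj_Xi N R F y r i - y r i) > 0"
  shows "ell_star N R F \<le> sqnormN N (\<lambda>i. Aop R y i - Aop R (proj_Xi N R F y) i)
                             / sqnormNR N R (\<lambda>r i. proj_Xi N R F y r i - y r i)"
  unfolding ell_star_def
proof (rule cSup_least)
  show "{l. 0 \<le> l \<and> (\<forall>y\<in>prodB N R F. l * sqnormNR N R (\<lambda>r i. proj_Xi N R F y r i - y r i)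
          \<le> sqnormN N (\<lambda>i. Aop R y i - Aop R (proj_Xi N R F y) i))} \<noteq> {}"
    using sqnormN_nonneg by auto
qed (use y pos in \<open>auto simp: pos_le_divide_eq\<close>)

text \<open>Truncated subtraction makes the height vanish for r = 0 and every r \<ge> 2n+1.\<close>

definition tent_height :: "nat \<Rightarrow> nat \<Rightarrow> real" where
  "tent_height n r = real (min r (2*n + 1 - r)) / real n"

definition tent_witness :: "nat \<Rightarrow> nat \<Rightarrow> nat \<Rightarrow> real" where
  "tent_witness n r = edge_vector r (tent_height n r)"

lemma tent_height_bound: "n \<ge> 1 \<Longrightarrow> \<bar>tent_height n r\<bar> \<le> 1"
  by (simp add: tent_height_def)

lemma tent_witness_in_prodB:
  assumes "n \<ge> 1"
  shows "tent_witness n \<in> prodB (2*n+1) (2*n) Fpath"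
  unfolding prodB_def
proof (intro CollectI conjI allI ballI impI)
  fix r assume "r \<notin> {1..2*n}"
  then have "tent_height n r = 0" by (auto simp: tent_height_def)
  then show "tent_witness n r = (\<lambda>_. 0)" by (simp add: tent_witness_def)
qed (use assms tent_height_bound in \<open>auto simp: tent_witness_def intro!: edge_vector_in_base_polytope\<close>)

lemma path_coeff_tent_witness:
  "r \<le> 2*n+1 \<Longrightarrow> path_coeff (2*n) (tent_witness n) r = tent_height n r"
  by (auto simp: path_coeff_def tent_witness_def edge_vector_def tent_height_def)

lemma tent_height_diff:
  assumes "1 \<le> i" "i \<le> 2*n+1"
  shows "tent_height n i - tent_height n (i-1) = (if i \<le> n then 1 else if i = n+1 then 0 else -1) / real n"
  using assms by (auto simp: tent_height_def min_def diff_divide_distrib[symmetric] of_nat_diff)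

lemma sqnormN_Aop_tent_witness:
  assumes "n \<ge> 1"
  shows "sqnormN (2*n+1) (Aop (2*n) (tent_witness n)) = 2 / real n"
proof -
  have "sqnormN (2*n+1) (Aop (2*n) (tent_witness n))
      = (\<Sum>i\<in>{1..2*n+1}. 1 / (real n)\<^sup>2 - (if i = n+1 then 1 / (real n)\<^sup>2 else 0))"
    unfolding sqnormN_def
  proof (rule sum.cong)
    fix i assume i: "i \<in> {1..2*n+1}"
    then have "Aop (2*n) (tent_witness n) i = tent_height n i - tent_height n (i-1)"
      using Aop_prodB_Fpath[OF tent_witness_in_prodB[OF assms]] path_coeff_tent_witness[of i n]
        path_coeff_tent_witness[of "i-1" n] by auto
    then show "(Aop (2*n) (tent_witness n) i)\<^sup>2 = 1 / (real n)\<^sup>2 - (if i = n+1 then 1 / (real n)\<^sup>2 else 0)"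
      using i tent_height_diff[of i n] by (auto simp: power_divide)
  qed simp
  also have "\<dots> = (2 * real n + 1) / (real n)\<^sup>2 - 1 / (real n)\<^sup>2"
    by (simp add: sum_subtractf)
  also have "\<dots> = 2 / real n"
    using assms by (simp add: field_simps power2_eq_square)
  finally show ?thesis .
qed

lemma sum_squares_nat: "(\<Sum>k\<in>{1..n}. (real k)\<^sup>2) = real n * (real n + 1) * (2 * real n + 1) / 6"
  by (induction n) (simp_all add: field_simps power2_eq_square)

lemma sum_tent_height_squares:
  "(\<Sum>r\<in>{1..2*n}. (real (min r (2*n + 1 - r)))\<^sup>2) = 2 * (\<Sum>k\<in>{1..n}. (real k)\<^sup>2)"
proof -
  have "(\<Sum>r\<in>{1..2*n}. (real (min r (2*n + 1 - r)))\<^sup>2) = (\<Sum>r\<in>{1..n+n}. (real (min r (2*n + 1 - r)))\<^sup>2)"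
    by (simp only: mult_2)
  also have "\<dots> = (\<Sum>r\<in>{1..n}. (real (min r (2*n + 1 - r)))\<^sup>2) + (\<Sum>r\<in>{n+1..n+n}. (real (min r (2*n + 1 - r)))\<^sup>2)"
    by (rule sum.ub_add_nat) simp
  also have "(\<Sum>r\<in>{1..n}. (real (min r (2*n + 1 - r)))\<^sup>2) = (\<Sum>k\<in>{1..n}. (real k)\<^sup>2)"
    by (rule sum.cong) auto
  also have "(\<Sum>r\<in>{n+1..n+n}. (real (min r (2*n + 1 - r)))\<^sup>2) = (\<Sum>k\<in>{1..n}. (real k)\<^sup>2)"
  proof (rule sum.reindex_bij_witness[of _ "\<lambda>k. 2*n+1-k" "\<lambda>r. 2*n+1-r"])
    fix r assume "r \<in> {n+1..n+n}"
    then have "min r (2*n + 1 - r) = 2*n + 1 - r" by (simp add: min_def, arith)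
    then show "(real (2*n+1-r))\<^sup>2 = (real (min r (2*n + 1 - r)))\<^sup>2" by simp
  qed (simp only: atLeastAtMost_iff, arith)+
  finally show ?thesis by simp
qed

lemma sqnormNR_tent_witness:
  assumes "n \<ge> 1"
  shows "sqnormNR (2*n+1) (2*n) (tent_witness n) = 2 * (real n + 1) * (2 * real n + 1) / (3 * real n)"
proof -
  have "sqnormNR (2*n+1) (2*n) (tent_witness n) = (\<Sum>r\<in>{1..2*n}. 2 * (tent_height n r)\<^sup>2)"
    unfolding sqnormNR_def
  proof (rule sum.cong)
    fix r assume r: "r \<in> {1..2*n}"
    have "(\<Sum>i\<in>{1..2*n+1}. (tent_witness n r i)\<^sup>2)
        = (\<Sum>i\<in>{1..2*n+1}. (if i = r then (tent_height n r)\<^sup>2 else 0) + (if i = r+1 then (tent_height n r)\<^sup>2 else 0))"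
      by (rule sum.cong) (use r in \<open>auto simp: tent_witness_def edge_vector_def\<close>)
    then show "(\<Sum>i\<in>{1..2*n+1}. (tent_witness n r i)\<^sup>2) = 2 * (tent_height n r)\<^sup>2"
      using r by (simp add: sum.distrib)
  qed simp
  also have "\<dots> = 2 * (\<Sum>r\<in>{1..2*n}. (real (min r (2*n + 1 - r)))\<^sup>2) / (real n)\<^sup>2"
    by (simp add: tent_height_def power_divide sum_distrib_left sum_divide_distrib)
  also have "\<dots> = 2 * (real n + 1) * (2 * real n + 1) / (3 * real n)"
    unfolding sum_tent_height_squares sum_squares_nat using assms by (simp add: field_simps power2_eq_square)
  finally show ?thesis .
qed

lemma tent_ratio_lt:
  fixes x :: real
  assumes "x \<ge> 1"
  shows "(2 / x) / (2 * (x + 1) * (2 * x + 1) / (3 * x)) < 7 / (2 * x + 1)\<^sup>2"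
proof -
  have pos: "0 < (x + 1) * (2 * x + 1)" "0 < (2 * x + 1)\<^sup>2"
    using assms by auto
  have "(2 / x) / (2 * (x + 1) * (2 * x + 1) / (3 * x)) = 3 / ((x + 1) * (2 * x + 1))"
    using assms by (simp add: field_split_simps)
  also have "\<dots> < 7 / (2 * x + 1)\<^sup>2"
  proof -
    have "7 * ((x + 1) * (2 * x + 1)) - 3 * (2 * x + 1)\<^sup>2 = (2 * x + 1) * (x + 4)"
      by (simp add: power2_eq_square algebra_simps)
    moreover have "(2 * x + 1) * (x + 4) > 0"
      using assms by simp
    ultimately have "3 * (2 * x + 1)\<^sup>2 < 7 * ((x + 1) * (2 * x + 1))"
      by linarith
    then show ?thesis
      using pos by (simp add: field_simps)
  qed
  finally show ?thesis .
qed

text \<open>The hypothesis n \<ge> 3 is stronger than needed: the argument works for every n \<ge> 1.\<close>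

theorem mainTheorem5:
  fixes n :: nat
  assumes "n \<ge> 3"
  shows "ell_star (2*n+1) (2*n) Fpath < 7 / (real (2*n+1))\<^sup>2"
proof -
  have n: "n \<ge> 1" using assms by simp
  let ?y = "tent_witness n"
  have proj: "proj_Xi (2*n+1) (2*n) Fpath ?y = (\<lambda>r i. 0)"
    by (rule proj_Xi_Fpath) simp
  have num: "(\<lambda>i. Aop (2*n) ?y i - Aop (2*n) (proj_Xi (2*n+1) (2*n) Fpath ?y) i) = Aop (2*n) ?y"
    unfolding proj by (simp add: Aop_def)
  have den: "sqnormNR (2*n+1) (2*n) (\<lambda>r i. proj_Xi (2*n+1) (2*n) Fpath ?y r i - ?y r i)
      = sqnormNR (2*n+1) (2*n) ?y"
    unfolding proj by (simp add: sqnormNR_def)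
  have "sqnormNR (2*n+1) (2*n) ?y > 0"
    using sqnormNR_tent_witness[OF n] n by simp
  then have "ell_star (2*n+1) (2*n) Fpath \<le> sqnormN (2*n+1) (Aop (2*n) ?y) / sqnormNR (2*n+1) (2*n) ?y"
    using ell_star_le_ratio[OF tent_witness_in_prodB[OF n]] unfolding num den by blast
  also have "\<dots> = (2 / real n) / (2 * (real n + 1) * (2 * real n + 1) / (3 * real n))"
    unfolding sqnormN_Aop_tent_witness[OF n] sqnormNR_tent_witness[OF n] ..
  also have "\<dots> < 7 / (2 * real n + 1)\<^sup>2"
    by (rule tent_ratio_lt) (use n in simp)
  also have "\<dots> = 7 / (real (2*n+1))\<^sup>2"
    by simp
  finally show ?thesis .
qed

end
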